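(* Let $p,l$ be distinct odd primes and let $\Gamma$, $\Gamma_p$, $\ell$, $n(\cdot)$ be as in the context. Let $a=\psi(x)\in\Gamma_p\setminus\{1\}$ with $x\in\tilde\Gamma$, and let $n=n(x)$. The following are equivalent: (a) $p\nmid n$; (b) $\ell(a^2)=2\ell(a)$; (c) $\left(\frac{-n}{p}\right)=1$. Similarly, for $b=\psi(y)\in\Gamma_l\setminus\{1\}$ with $y\in\tilde\Gamma$ and $n=n(y)$, the following are equivalent: $l\nmid n$; $\ell(b^2)=2\ell(b)$; $\left(\frac{-n}{l}\right)=1$.
   Context: Let $p,l$ be distinct odd primes. Let $\mathbb H(\mathbb Z)$ be the ring of quaternions $x=x_0+x_1i+x_2j+x_3k$ with $x_0,\dots,x_3\in\mathbb Z$, where $i^2=j^2=k^2=-1$, $ij=-ji=k$; write $|x|^2=x_0^2+x_1^2+x_2^2+x_3^2$. Fix $c_p,d_p\in\mathbb Q_p$ with $c_p^2+d_p^2+1=0$ and $c_l,d_l\in\mathbb Q_l$ with $c_l^2+d_l^2+1=0$. Define $\psi:\mathbb H(\mathbb Z)\setminus\{0\}\to G:=PGL_2(\mathbb Q_p)\times PGL_2(\mathbb Q_l)$ by sending $x$ to the class of the pair $\left(\begin{pmatrix} x_0+x_1c_p+x_3d_p & -x_1d_p+x_2+x_3c_p\\ -x_1d_p-x_2+x_3c_p & x_0-x_1c_p-x_3d_p\end{pmatrix},\begin{pmatrix} x_0+x_1c_l+x_3d_l & -x_1d_l+x_2+x_3c_l\\ -x_1d_l-x_2+x_3c_l & x_0-x_1c_l-x_3d_l\end{pmatrix}\right)$.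 Let $\tilde\Gamma$ be the set of $x\in\mathbb H(\mathbb Z)$ such that $|x|^2=p^rl^s$ for some integers $r,s\ge 0$, and such that $x_0$ is odd and $x_1,x_2,x_3$ are even if $|x|^2\equiv 1\pmod 4$, while $x_1$ is even and $x_0,x_2,x_3$ are odd if $|x|^2\equiv 3\pmod 4$. Then $\Gamma=\psi(\tilde\Gamma)$ is a torsion-free lattice in $G$. Let $\tilde A=\{x\in\tilde\Gamma: x_0>0,\ |x|^2=p\}$, $\tilde B=\{y\in\tilde\Gamma: y_0>0,\ |y|^2=l\}$; $\Gamma_p=\langle\psi(\tilde A)\rangle$ and $\Gamma_l=\langle\psi(\tilde B)\rangle$ are free, and $\psi(\tilde A)\cup\psi(\tilde B)$ generates $\Gamma$. For $\gamma\in\Gamma$, $\ell(\gamma)$ is the word length of $\gamma$ with respect to the generating set $\psi(\tilde A)\cup\psi(\tilde B)$. Any $x\in\tilde\Gamma$ with $\psi(x)\ne 1$ can be written $x=x_0+z_0(c_1i+c_2j+c_3k)$ with $z_0\in\mathbb Z\setminus\{0\}$ and $c_1,c_2,c_3\in\mathbb Z$ relatively prime; set $n(x)=c_1^2+c_2^2+c_3^2$. For a prime $q$, $\left(\frac{m}{q}\right)$ is the Legendre symbol (equal to $0$ if $q\mid m$). *)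

theory Defs
  imports "HOL-Analysis.Analysis" "HOL-Number_Theory.Number_Theory"
begin

text \<open>Integer quaternions x = x0 + x1 i + x2 j + x3 k, represented by (x0,x1,x2,x3).\<close>
type_synonym quat = "int \<times> int \<times> int \<times> int"

definition qnorm :: "quat \<Rightarrow> int" where
  "qnorm x = (case x of (x0,x1,x2,x3) \<Rightarrow> x0^2 + x1^2 + x2^2 + x3^2)"

definition qre :: "quat \<Rightarrow> int" where
  "qre x = (case x of (x0,x1,x2,x3) \<Rightarrow> x0)"

definition in_Gamma_tilde :: "nat \<Rightarrow> nat \<Rightarrow> quat \<Rightarrow> bool" where
  "in_Gamma_tilde p l x \<longleftrightarrow>
     (case x of (x0,x1,x2,x3) \<Rightarrow>
        (\<exists>r s. qnorm x = int (p ^ r * l ^ s)) \<and>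
        (qnorm x mod 4 = 1 \<longrightarrow> odd x0 \<and> even x1 \<and> even x2 \<and> even x3) \<and>
        (qnorm x mod 4 = 3 \<longrightarrow> even x1 \<and> odd x0 \<and> odd x2 \<and> odd x3))"

definition A_tilde :: "nat \<Rightarrow> nat \<Rightarrow> quat set" where
  "A_tilde p l = {x. in_Gamma_tilde p l x \<and> qre x > 0 \<and> qnorm x = int p}"

definition B_tilde :: "nat \<Rightarrow> nat \<Rightarrow> quat set" where
  "B_tilde p l = {y. in_Gamma_tilde p l y \<and> qre y > 0 \<and> qnorm y = int l}"

definition nval :: "quat \<Rightarrow> int" where
  "nval x = (case x of (x0,x1,x2,x3) \<Rightarrow>
     (THE m. \<exists>z0 c1 c2 c3. z0 \<noteq> 0 \<and> gcd (gcd c1 c2) c3 = 1 \<and>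
        x1 = z0 * c1 \<and> x2 = z0 * c2 \<and> x3 = z0 * c3 \<and> m = c1^2 + c2^2 + c3^2))"

text \<open>The matrix component of psi over a field containing c,d with c^2+d^2+1=0.\<close>
definition psi_mat :: "'a::field \<Rightarrow> 'a \<Rightarrow> quat \<Rightarrow> 'a^2^2" where
  "psi_mat c d x = (case x of (x0,x1,x2,x3) \<Rightarrow>
     vector [vector [of_int x0 + of_int x1 * c + of_int x3 * d,
                     - of_int x1 * d + of_int x2 + of_int x3 * c],
             vector [- of_int x1 * d - of_int x2 + of_int x3 * c,
                     of_int x0 - of_int x1 * c - of_int x3 * d]])"

text \<open>Representatives of elements of G = PGL2(K1) x PGL2(K2): pairs of matrices.\<close>
definition psi :: "'a::field \<Rightarrow> 'a \<Rightarrow> 'b::field \<Rightarrow> 'b \<Rightarrow> quat \<Rightarrow> ('a^2^2) \<times> ('b^2^2)" where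
  "psi cp dp cl dl x = (psi_mat cp dp x, psi_mat cl dl x)"

definition gmul :: "('a::field^2^2) \<times> ('b::field^2^2) \<Rightarrow> ('a^2^2) \<times> ('b^2^2) \<Rightarrow> ('a^2^2) \<times> ('b^2^2)" where
  "gmul g h = (fst g ** fst h, snd g ** snd h)"

definition ginv :: "('a::field^2^2) \<times> ('b::field^2^2) \<Rightarrow> ('a^2^2) \<times> ('b^2^2)" where
  "ginv g = (matrix_inv (fst g), matrix_inv (snd g))"

definition gone :: "('a::field^2^2) \<times> ('b::field^2^2)" where
  "gone = (mat 1, mat 1)"

definition pgl_eq :: "'a::field^2^2 \<Rightarrow> 'a^2^2 \<Rightarrow> bool" where
  "pgl_eq A B \<longleftrightarrow> (\<exists>c. c \<noteq> 0 \<and> A = (\<chi> i j. c * B $ i $ j))"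

definition G_eq :: "('a::field^2^2) \<times> ('b::field^2^2) \<Rightarrow> ('a^2^2) \<times> ('b^2^2) \<Rightarrow> bool" where
  "G_eq g h \<longleftrightarrow> pgl_eq (fst g) (fst h) \<and> pgl_eq (snd g) (snd h)"

definition word_prod :: "'a::field \<Rightarrow> 'a \<Rightarrow> 'b::field \<Rightarrow> 'b \<Rightarrow> (quat \<times> bool) list
    \<Rightarrow> ('a^2^2) \<times> ('b^2^2)" where
  "word_prod cp dp cl dl ws =
     foldr (\<lambda>(x, b) acc. gmul (if b then ginv (psi cp dp cl dl x) else psi cp dp cl dl x) acc)
       ws gone"

definition in_generated :: "'a::field \<Rightarrow> 'a \<Rightarrow> 'b::field \<Rightarrow> 'b \<Rightarrow> quat set
    \<Rightarrow> ('a^2^2) \<times> ('b^2^2) \<Rightarrow> bool" where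
  "in_generated cp dp cl dl S g \<longleftrightarrow>
     (\<exists>ws. set (map fst ws) \<subseteq> S \<and> G_eq (word_prod cp dp cl dl ws) g)"

definition word_length :: "'a::field \<Rightarrow> 'a \<Rightarrow> 'b::field \<Rightarrow> 'b \<Rightarrow> quat set
    \<Rightarrow> ('a^2^2) \<times> ('b^2^2) \<Rightarrow> nat" where
  "word_length cp dp cl dl S g =
     (LEAST k. \<exists>ws. length ws = k \<and> set (map fst ws) \<subseteq> S \<and> G_eq (word_prod cp dp cl dl ws) g)"

end

(*
  Letters of norm q are read as integer quaternions, and a word maps, up to
  scalars, to the product Z of its letters (inverses read as conjugates).  For
  an odd prime q, the product can become divisible by q only through an
  adjacent pair x x^-1: if q divides z u w and N(u) but not u w, the identity
  u t u = tr(u t) u - N(u) conj t forces q | z u, and the parity normalisation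
  of the generators makes conj x the only norm-q generator y with q | x y.
  Cancelling such pairs yields a word whose product Z is not divisible by q;
  comparing q-adic valuations of norms shows that its length r is the word
  length.  Hence l(a^2) = 2 l(a) iff q does not divide Z^2.  Writing
  Z = z + g (c1 i + c2 j + c3 k) with gcd (c1, c2, c3) = 1 and n = c1^2 + c2^2 + c3^2,
  we have z^2 + g^2 n = q^r and Z^2 = z^2 - g^2 n + 2 z g (c1 i + c2 j + c3 k).
  So q | Z^2 iff q | n, and otherwise q does not divide g and -n is congruent
  to the nonzero square (z/g)^2 modulo q.
*)
theory Submission
  imports Defs
begin

section \<open>Integer quaternions\<close>

definition qmult :: "quat \<Rightarrow> quat \<Rightarrow> quat" where
  "qmult x y = (case x of (a0,a1,a2,a3) \<Rightarrow> case y of (b0,b1,b2,b3) \<Rightarrow>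
     (a0*b0 - a1*b1 - a2*b2 - a3*b3, a0*b1 + a1*b0 + a2*b3 - a3*b2,
      a0*b2 - a1*b3 + a2*b0 + a3*b1, a0*b3 + a1*b2 - a2*b1 + a3*b0))"

definition qconj :: "quat \<Rightarrow> quat" where
  "qconj x = (case x of (a0,a1,a2,a3) \<Rightarrow> (a0,-a1,-a2,-a3))"

definition qscale :: "int \<Rightarrow> quat \<Rightarrow> quat" where
  "qscale k x = (case x of (a0,a1,a2,a3) \<Rightarrow> (k*a0,k*a1,k*a2,k*a3))"

definition qone :: quat where
  "qone = (1,0,0,0)"

definition qdvd :: "int \<Rightarrow> quat \<Rightarrow> bool" where
  "qdvd k x = (case x of (a0,a1,a2,a3) \<Rightarrow> k dvd a0 \<and> k dvd a1 \<and> k dvd a2 \<and> k dvd a3)"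

lemma qmult_simp [simp]: "qmult (a0,a1,a2,a3) (b0,b1,b2,b3) =
     (a0*b0 - a1*b1 - a2*b2 - a3*b3, a0*b1 + a1*b0 + a2*b3 - a3*b2,
      a0*b2 - a1*b3 + a2*b0 + a3*b1, a0*b3 + a1*b2 - a2*b1 + a3*b0)"
  by (simp add: qmult_def)

lemma qconj_simp [simp]: "qconj (a0,a1,a2,a3) = (a0,-a1,-a2,-a3)"
  by (simp add: qconj_def)

lemma qscale_simp [simp]: "qscale k (a0,a1,a2,a3) = (k*a0,k*a1,k*a2,k*a3)"
  by (simp add: qscale_def)

lemma qdvd_simp [simp]: "qdvd k (a0,a1,a2,a3) \<longleftrightarrow> k dvd a0 \<and> k dvd a1 \<and> k dvd a2 \<and> k dvd a3"
  by (simp add: qdvd_def)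

lemma qnorm_simp [simp]: "qnorm (a0,a1,a2,a3) = a0^2 + a1^2 + a2^2 + a3^2"
  by (simp add: qnorm_def)

lemma qre_simp [simp]: "qre (a0,a1,a2,a3) = a0"
  by (simp add: qre_def)

lemma qmult_assoc: "qmult (qmult x y) z = qmult x (qmult y z)"
  by (cases x rule: prod_cases4; cases y rule: prod_cases4; cases z rule: prod_cases4)
     (simp add: algebra_simps)

lemma qmult_qone_left [simp]: "qmult qone x = x"
  by (cases x rule: prod_cases4) (simp add: qone_def)

lemma qmult_qone_right [simp]: "qmult x qone = x"
  by (cases x rule: prod_cases4) (simp add: qone_def)

lemma qnorm_qmult: "qnorm (qmult x y) = qnorm x * qnorm y"
  by (cases x rule: prod_cases4; cases y rule: prod_cases4) (simp add: algebra_simps power2_eq_square)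

lemma qnorm_qconj [simp]: "qnorm (qconj x) = qnorm x"
  by (cases x rule: prod_cases4) simp

lemma qnorm_qscale: "qnorm (qscale k x) = k^2 * qnorm x"
  by (cases x rule: prod_cases4) (simp add: algebra_simps power2_eq_square)

lemma qnorm_qone [simp]: "qnorm qone = 1"
  by (simp add: qone_def)

lemma qnorm_eq_0_iff: "qnorm x = 0 \<longleftrightarrow> x = 0"
  by (cases x rule: prod_cases4) (simp add: add_nonneg_eq_0_iff zero_prod_def)

lemma qmult_qconj_right: "qmult x (qconj x) = qscale (qnorm x) qone"
  by (cases x rule: prod_cases4) (simp add: qone_def algebra_simps power2_eq_square)

lemma qmult_qconj_left: "qmult (qconj x) x = qscale (qnorm x) qone"
  by (cases x rule: prod_cases4) (simp add: qone_def algebra_simps power2_eq_square)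

lemma qmult_qscale_left: "qmult (qscale k x) y = qscale k (qmult x y)"
  by (cases x rule: prod_cases4; cases y rule: prod_cases4) (simp add: algebra_simps)

lemma qmult_qscale_right: "qmult x (qscale k y) = qscale k (qmult x y)"
  by (cases x rule: prod_cases4; cases y rule: prod_cases4) (simp add: algebra_simps)

lemma qscale_qscale: "qscale a (qscale b x) = qscale (a * b) x"
  by (cases x rule: prod_cases4) (simp add: algebra_simps)

lemma qscale_1 [simp]: "qscale 1 x = x"
  by (cases x rule: prod_cases4) simp

lemma qscale_cancel: "k \<noteq> 0 \<Longrightarrow> qscale k x = qscale k y \<longleftrightarrow> x = y"
  by (cases x rule: prod_cases4; cases y rule: prod_cases4) simp

lemma qmult_diff_right: "qmult z (x - y) = qmult z x - qmult z y"
  by (cases x rule: prod_cases4; cases y rule: prod_cases4; cases z rule: prod_cases4)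
     (simp add: algebra_simps)

lemma qdvd_qmult_left: "qdvd k x \<Longrightarrow> qdvd k (qmult x y)"
  by (cases x rule: prod_cases4; cases y rule: prod_cases4) auto

lemma qdvd_qscale: "qdvd k (qscale k x)"
  by (cases x rule: prod_cases4) auto

lemma qdvdE:
  assumes "qdvd k x"
  obtains y where "x = qscale k y"
proof -
  obtain a0 a1 a2 a3 where x: "x = (a0,a1,a2,a3)" by (cases x rule: prod_cases4)
  with assms obtain b0 b1 b2 b3 where "a0 = k*b0" "a1 = k*b1" "a2 = k*b2" "a3 = k*b3"
    by (auto elim!: dvdE)
  with x have "x = qscale k (b0,b1,b2,b3)" by simp
  then show thesis by (rule that)
qed

lemma qdvd_imp_sq_dvd_qnorm: "qdvd k x \<Longrightarrow> k^2 dvd qnorm x"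
  by (cases x rule: prod_cases4) (auto simp: power2_eq_square intro!: dvd_add mult_dvd_mono)

lemma qmult_sandwich:
  "qmult u (qmult t u) = qscale (2 * qre (qmult u t)) u - qscale (qnorm u) (qconj t)"
  by (cases u rule: prod_cases4; cases t rule: prod_cases4) (simp add: algebra_simps power2_eq_square)

definition qprod :: "quat list \<Rightarrow> quat" where
  "qprod ys = foldr qmult ys qone"

lemma qprod_Nil [simp]: "qprod [] = qone"
  by (simp add: qprod_def)

lemma qprod_Cons [simp]: "qprod (y # ys) = qmult y (qprod ys)"
  by (simp add: qprod_def)

lemma qprod_append: "qprod (xs @ ys) = qmult (qprod xs) (qprod ys)"
  by (induction xs) (simp_all add: qmult_assoc)

section \<open>The embedding into pairs of 2x2 matrices\<close>

definition mat_scale :: "'a::field \<Rightarrow> 'a^2^2 \<Rightarrow> 'a^2^2" where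
  "mat_scale k A = (\<chi> i j. k * A $ i $ j)"

lemma mat_scale_nth [simp]: "mat_scale k A $ i $ j = k * A $ i $ j"
  by (simp add: mat_scale_def)

lemma mat2_eq_iff:
  "(A::'a^2^2) = B \<longleftrightarrow> A$1$1 = B$1$1 \<and> A$1$2 = B$1$2 \<and> A$2$1 = B$2$1 \<and> A$2$2 = B$2$2"
  by (auto simp: vec_eq_iff forall_2)

lemma matrix_mult_nth2 [simp]:
  "((A::'a::semiring_1^2^2) ** B) $ i $ j = A$i$1 * B$1$j + A$i$2 * B$2$j"
  by (simp add: matrix_matrix_mult_def sum_2)

lemma mat_nth2 [simp]:
  "(mat k :: 'a::zero^2^2) $1$1 = k" "(mat k :: 'a::zero^2^2) $1$2 = 0"
  "(mat k :: 'a::zero^2^2) $2$1 = 0" "(mat k :: 'a::zero^2^2) $2$2 = k"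
  by (simp_all add: mat_def)

lemma mat_scale_mult_left: "mat_scale k A ** B = mat_scale k (A ** B)"
  by (simp add: mat2_eq_iff algebra_simps)

lemma mat_scale_mult_right: "A ** mat_scale k B = mat_scale k (A ** B)"
  by (simp add: mat2_eq_iff algebra_simps)

lemma mat_scale_mat_scale: "mat_scale a (mat_scale b A) = mat_scale (a * b) A"
  by (simp add: mat2_eq_iff algebra_simps)

lemma mat_scale_1 [simp]: "mat_scale 1 A = A"
  by (simp add: mat2_eq_iff)

lemma matrix_inv_eqI:
  fixes A B :: "'a::field^2^2"
  assumes AB: "A ** B = mat 1" and BA: "B ** A = mat 1"
  shows "matrix_inv A = B"
proof -
  define C where "C = matrix_inv A"
  have "\<exists>A'. A ** A' = mat 1 \<and> A' ** A = mat 1" using AB BA by blast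
  then have C: "C ** A = mat 1"
    unfolding C_def matrix_inv_def by (rule someI2_ex) simp
  have "C = C ** (A ** B)" using AB by (simp add: matrix_mul_rid)
  also have "\<dots> = B" using C by (simp add: matrix_mul_assoc matrix_mul_lid)
  finally show ?thesis unfolding C_def .
qed

lemma psi_mat_nth:
  "psi_mat c d (a0,a1,a2,a3) $1$1 = of_int a0 + of_int a1 * c + of_int a3 * d"
  "psi_mat c d (a0,a1,a2,a3) $1$2 = - of_int a1 * d + of_int a2 + of_int a3 * c"
  "psi_mat c d (a0,a1,a2,a3) $2$1 = - of_int a1 * d - of_int a2 + of_int a3 * c"
  "psi_mat c d (a0,a1,a2,a3) $2$2 = of_int a0 - of_int a1 * c - of_int a3 * d"
  by (simp_all add: psi_mat_def)

text \<open>Each entry of \<open>psi(x) psi(y)\<close> differs from the entry of \<open>psi(x y)\<close> by a multiple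
  of \<open>c\<^sup>2 + d\<^sup>2 + 1\<close>.\<close>
lemma psi_mat_mult_entries:
  fixes c d x0 x1 x2 x3 y0 y1 y2 y3 :: "'a::comm_ring_1"
  defines "e \<equiv> c^2 + d^2 + 1"
  shows "(x0 + x1*c + x3*d) * (y0 + y1*c + y3*d) + (- x1*d + x2 + x3*c) * (- y1*d - y2 + y3*c)
     = (x0*y0 - x1*y1 - x2*y2 - x3*y3) + (x0*y1 + x1*y0 + x2*y3 - x3*y2) * c
       + (x0*y3 + x1*y2 - x2*y1 + x3*y0) * d + (x1*y1 + x3*y3) * e"
    "(x0 + x1*c + x3*d) * (- y1*d + y2 + y3*c) + (- x1*d + x2 + x3*c) * (y0 - y1*c - y3*d)
     = - (x0*y1 + x1*y0 + x2*y3 - x3*y2) * d + (x0*y2 - x1*y3 + x2*y0 + x3*y1)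
       + (x0*y3 + x1*y2 - x2*y1 + x3*y0) * c + (x1*y3 - x3*y1) * e"
    "(- x1*d - x2 + x3*c) * (y0 + y1*c + y3*d) + (x0 - x1*c - x3*d) * (- y1*d - y2 + y3*c)
     = - (x0*y1 + x1*y0 + x2*y3 - x3*y2) * d - (x0*y2 - x1*y3 + x2*y0 + x3*y1)
       + (x0*y3 + x1*y2 - x2*y1 + x3*y0) * c - (x1*y3 - x3*y1) * e"
    "(- x1*d - x2 + x3*c) * (- y1*d + y2 + y3*c) + (x0 - x1*c - x3*d) * (y0 - y1*c - y3*d)
     = (x0*y0 - x1*y1 - x2*y2 - x3*y3) - (x0*y1 + x1*y0 + x2*y3 - x3*y2) * c
       - (x0*y3 + x1*y2 - x2*y1 + x3*y0) * d + (x1*y1 + x3*y3) * e"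
  unfolding e_def by (simp_all add: algebra_simps power2_eq_square)

lemma psi_mat_qmult:
  fixes c d :: "'a::field"
  assumes "c^2 + d^2 + 1 = 0"
  shows "psi_mat c d (qmult x y) = psi_mat c d x ** psi_mat c d y"
proof -
  obtain x0 x1 x2 x3 where x: "x = (x0,x1,x2,x3)" by (cases x rule: prod_cases4)
  obtain y0 y1 y2 y3 where y: "y = (y0,y1,y2,y3)" by (cases y rule: prod_cases4)
  show ?thesis
    unfolding x y mat2_eq_iff matrix_mult_nth2 qmult_simp psi_mat_nth
      of_int_add of_int_diff of_int_mult psi_mat_mult_entries assms
    by simp
qed

lemma psi_mat_qscale: "psi_mat c d (qscale k x) = mat_scale (of_int k) (psi_mat c d x)"
  by (cases x rule: prod_cases4) (simp add: mat2_eq_iff psi_mat_nth algebra_simps)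

lemma psi_mat_qone: "psi_mat c d qone = mat 1"
  by (simp add: qone_def mat2_eq_iff psi_mat_nth)

lemma psi_mat_inverse:
  fixes c d :: "'a::field_char_0"
  assumes cd: "c^2 + d^2 + 1 = 0" and "qnorm x \<noteq> 0"
  shows "matrix_inv (psi_mat c d x) = mat_scale (1 / of_int (qnorm x)) (psi_mat c d (qconj x))"
proof (rule matrix_inv_eqI)
  have "(of_int (qnorm x) :: 'a) \<noteq> 0" using assms(2) by simp
  then show "psi_mat c d x ** mat_scale (1 / of_int (qnorm x)) (psi_mat c d (qconj x)) = mat 1"
    and "mat_scale (1 / of_int (qnorm x)) (psi_mat c d (qconj x)) ** psi_mat c d x = mat 1"
    by (simp_all add: mat_scale_mult_left mat_scale_mult_right psi_mat_qmult[OF cd, symmetric]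
        qmult_qconj_right qmult_qconj_left psi_mat_qscale psi_mat_qone mat_scale_mat_scale)
qed

text \<open>As \<open>c\<^sup>2 + d\<^sup>2 = -1\<close> excludes \<open>c = d = 0\<close>, the equations \<open>x1 c + x3 d = 0\<close> and
  \<open>x3 c - x1 d = 0\<close> force \<open>x1 = x3 = 0\<close>.\<close>
lemma psi_mat_eq_scalar:
  fixes c d s :: "'a::field_char_0"
  assumes cd: "c^2 + d^2 + 1 = 0" and eq: "psi_mat c d w = mat s"
  shows "w = (qre w, 0, 0, 0)" and "of_int (qre w) = s"
proof -
  obtain w0 w1 w2 w3 where w: "w = (w0,w1,w2,w3)" by (cases w rule: prod_cases4)
  from eq have e1: "of_int w0 + of_int w1 * c + of_int w3 * d = s"
    and e2: "- of_int w1 * d + of_int w2 + of_int w3 * c = 0"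
    and e3: "- of_int w1 * d - of_int w2 + of_int w3 * c = (0::'a)"
    and e4: "of_int w0 - of_int w1 * c - of_int w3 * d = s"
    unfolding w mat2_eq_iff psi_mat_nth by simp_all
  from e2 e3 have "2 * (of_int w2 :: 'a) = 0" by (simp add: algebra_simps)
  then have w2: "w2 = 0" by simp
  from e1 e4 have "2 * (of_int w1 * c + of_int w3 * d) = (0::'a)" by (simp add: algebra_simps)
  then have f1: "of_int w1 * c + of_int w3 * d = (0::'a)" by (metis mult_eq_0_iff zero_neq_numeral)
  from e2 w2 have f2: "of_int w3 * c - of_int w1 * d = (0::'a)" by (simp add: algebra_simps)
  have "(of_int (w1^2 + w3^2) :: 'a) * c
      = of_int w1 * (of_int w1 * c + of_int w3 * d) + of_int w3 * (of_int w3 * c - of_int w1 * d)"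
   and "(of_int (w1^2 + w3^2) :: 'a) * d
      = of_int w3 * (of_int w1 * c + of_int w3 * d) - of_int w1 * (of_int w3 * c - of_int w1 * d)"
    by (simp_all add: algebra_simps power2_eq_square)
  then have "(of_int (w1^2 + w3^2) :: 'a) * c = 0" "(of_int (w1^2 + w3^2) :: 'a) * d = 0"
    using f1 f2 by simp_all
  moreover have "c \<noteq> 0 \<or> d \<noteq> 0" using cd by auto
  ultimately have "(of_int (w1^2 + w3^2) :: 'a) = 0" by auto
  then have "w1 = 0" "w3 = 0" by (simp_all only: of_int_eq_0_iff sum_power2_eq_zero_iff)
  with w w2 e1 show "w = (qre w, 0, 0, 0)" and "of_int (qre w) = s" by simp_all
qed

lemma pgl_eq_iff: "pgl_eq A B \<longleftrightarrow> (\<exists>k. k \<noteq> 0 \<and> A = mat_scale k B)"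
  by (simp add: pgl_eq_def mat_scale_def)

lemma pgl_eq_refl: "pgl_eq A A"
  unfolding pgl_eq_iff by (intro exI[of _ 1]) simp

lemma pgl_eq_sym: "pgl_eq A B \<Longrightarrow> pgl_eq B A"
proof -
  assume "pgl_eq A B"
  then obtain k where "k \<noteq> 0" "A = mat_scale k B" unfolding pgl_eq_iff by blast
  then have "B = mat_scale (1 / k) A" by (simp add: mat_scale_mat_scale)
  with \<open>k \<noteq> 0\<close> show ?thesis unfolding pgl_eq_iff by (intro exI[of _ "1 / k"]) simp
qed

lemma pgl_eq_trans: "pgl_eq A B \<Longrightarrow> pgl_eq B C \<Longrightarrow> pgl_eq A C"
proof -
  assume "pgl_eq A B" "pgl_eq B C"
  then obtain k k' where "k \<noteq> 0" "k' \<noteq> 0" "A = mat_scale (k * k') C"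
    unfolding pgl_eq_iff by (auto simp: mat_scale_mat_scale)
  then show ?thesis unfolding pgl_eq_iff by (intro exI[of _ "k * k'"]) simp
qed

lemma pgl_eq_mat_scale_self: "k \<noteq> 0 \<Longrightarrow> pgl_eq (mat_scale k A) A"
  unfolding pgl_eq_iff by blast

lemma pgl_eq_mat_scale_left: "k \<noteq> 0 \<Longrightarrow> pgl_eq (mat_scale k A) B \<longleftrightarrow> pgl_eq A B"
  using pgl_eq_mat_scale_self pgl_eq_sym pgl_eq_trans by blast

lemma pgl_eq_mat_scale_right: "k \<noteq> 0 \<Longrightarrow> pgl_eq A (mat_scale k B) \<longleftrightarrow> pgl_eq A B"
  using pgl_eq_mat_scale_self pgl_eq_sym pgl_eq_trans by blast

lemma G_eq_sym: "G_eq g h \<Longrightarrow> G_eq h g"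
  by (simp add: G_eq_def pgl_eq_sym)

lemma G_eq_trans [trans]: "G_eq g h \<Longrightarrow> G_eq h k \<Longrightarrow> G_eq g k"
  by (meson G_eq_def pgl_eq_trans)

definition qproportional :: "quat \<Rightarrow> quat \<Rightarrow> bool" where
  "qproportional u v \<longleftrightarrow> (\<exists>m n. m \<noteq> 0 \<and> n \<noteq> 0 \<and> qscale m u = qscale n v)"

lemma qproportional_sym: "qproportional u v \<Longrightarrow> qproportional v u"
  unfolding qproportional_def by metis

lemma qproportional_qscale: "k \<noteq> 0 \<Longrightarrow> qproportional (qscale k u) u"
  unfolding qproportional_def by (intro exI[of _ 1] exI[of _ k]) (simp add: qscale_qscale)

lemma qproportional_square: "qproportional u v \<Longrightarrow> qproportional (qmult u u) (qmult v v)"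
proof -
  assume "qproportional u v"
  then obtain m n where "m \<noteq> 0" "n \<noteq> 0" "qscale m u = qscale n v"
    unfolding qproportional_def by blast
  moreover have "qscale (k * k) (qmult w w) = qmult (qscale k w) (qscale k w)" for k w
    by (simp add: qmult_qscale_left qmult_qscale_right qscale_qscale)
  ultimately show ?thesis unfolding qproportional_def
    by (intro exI[of _ "m * m"] exI[of _ "n * n"]) simp
qed

lemma pgl_eq_psi_mat_if_qproportional:
  fixes c d :: "'a::field_char_0"
  assumes "qproportional u v"
  shows "pgl_eq (psi_mat c d u) (psi_mat c d v)"
proof -
  obtain m n where "m \<noteq> 0" "n \<noteq> 0" "qscale m u = qscale n v"
    using assms unfolding qproportional_def by blast
  then have "pgl_eq (mat_scale (of_int m) (psi_mat c d u)) (mat_scale (of_int n) (psi_mat c d v))"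
    by (metis psi_mat_qscale pgl_eq_refl)
  with \<open>m \<noteq> 0\<close> \<open>n \<noteq> 0\<close> show ?thesis
    by (simp add: pgl_eq_mat_scale_left pgl_eq_mat_scale_right)
qed

text \<open>\<open>psi(u conj v)\<close> is scalar, so \<open>u conj v\<close> is a rational integer \<open>r\<close> and
  \<open>N(v) u = r v\<close>.\<close>
lemma qproportional_if_pgl_eq_psi_mat:
  fixes c d :: "'a::field_char_0"
  assumes cd: "c^2 + d^2 + 1 = 0" and eq: "pgl_eq (psi_mat c d u) (psi_mat c d v)"
    and v: "v \<noteq> 0"
  shows "qproportional u v"
proof -
  obtain k where k: "k \<noteq> 0" "psi_mat c d u = mat_scale k (psi_mat c d v)"
    using eq pgl_eq_iff by blast
  have nv: "qnorm v \<noteq> 0" using v by (simp add: qnorm_eq_0_iff)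
  define w where "w = qmult u (qconj v)"
  have "psi_mat c d w = mat_scale (k * of_int (qnorm v)) (mat 1)"
    unfolding w_def psi_mat_qmult[OF cd] k(2) mat_scale_mult_left
    by (simp add: psi_mat_qmult[OF cd, symmetric] qmult_qconj_right psi_mat_qscale psi_mat_qone
        mat_scale_mat_scale)
  also have "\<dots> = mat (k * of_int (qnorm v))"
    by (simp add: mat2_eq_iff)
  finally have w0: "w = (qre w, 0, 0, 0)" and "of_int (qre w) = k * of_int (qnorm v)"
    by (rule psi_mat_eq_scalar[OF cd])+
  have "qmult w v = qscale (qnorm v) u"
    unfolding w_def qmult_assoc qmult_qconj_left qmult_qscale_right
    by (cases u rule: prod_cases4) (simp add: qone_def)
  moreover have "qmult w v = qscale (qre w) v"
    by (subst w0, cases v rule: prod_cases4) simp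
  moreover have "qre w \<noteq> 0"
    using \<open>of_int (qre w) = k * of_int (qnorm v)\<close> k(1) nv by auto
  ultimately show ?thesis unfolding qproportional_def using nv by metis
qed

section \<open>Words and their quaternions\<close>

text \<open>An inverted generator \<open>psi(x)\<^sup>-\<^sup>1\<close> is read as \<open>conj x\<close>, which represents the same element
  of \<open>PGL\<^sub>2\<close>.\<close>
definition letter_quat :: "quat \<times> bool \<Rightarrow> quat" where
  "letter_quat xb = (if snd xb then qconj (fst xb) else fst xb)"

definition word_quat :: "(quat \<times> bool) list \<Rightarrow> quat" where
  "word_quat ws = qprod (map letter_quat ws)"

definition word_mat :: "'a::field \<Rightarrow> 'a \<Rightarrow> (quat \<times> bool) list \<Rightarrow> 'a^2^2" where
  "word_mat c d ws = foldr (\<lambda>(x, b) acc.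
     (if b then matrix_inv (psi_mat c d x) else psi_mat c d x) ** acc) ws (mat 1)"

lemma word_quat_Nil [simp]: "word_quat [] = qone"
  by (simp add: word_quat_def)

lemma word_quat_append: "word_quat (ws @ vs) = qmult (word_quat ws) (word_quat vs)"
  by (simp add: word_quat_def qprod_append)

lemma qnorm_letter_quat [simp]: "qnorm (letter_quat xb) = qnorm (fst xb)"
  by (simp add: letter_quat_def)

lemma word_prod_eq_word_mat: "word_prod cp dp cl dl ws = (word_mat cp dp ws, word_mat cl dl ws)"
  by (induction ws) (auto simp: word_prod_def word_mat_def gmul_def ginv_def psi_def gone_def)

lemma word_mat_eq_mat_scale:
  fixes c d :: "'a::field_char_0"
  assumes cd: "c^2 + d^2 + 1 = 0" and "\<forall>x\<in>set (map fst ws). qnorm x \<noteq> 0"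
  shows "\<exists>k. k \<noteq> 0 \<and> word_mat c d ws = mat_scale k (psi_mat c d (word_quat ws))"
  using assms(2)
proof (induction ws)
  case Nil
  then show ?case by (intro exI[of _ 1]) (simp add: word_mat_def psi_mat_qone)
next
  case (Cons xb ws)
  obtain x b where xb: "xb = (x, b)" by (cases xb)
  from Cons obtain k where k: "k \<noteq> 0" "word_mat c d ws = mat_scale k (psi_mat c d (word_quat ws))"
    by auto
  have nx: "qnorm x \<noteq> 0" using Cons.prems xb by auto
  have step: "word_mat c d (xb # ws)
      = (if b then matrix_inv (psi_mat c d x) else psi_mat c d x) ** word_mat c d ws"
    by (simp add: word_mat_def xb)
  have "word_mat c d (xb # ws)
      = mat_scale ((if b then 1 / of_int (qnorm x) else 1) * k) (psi_mat c d (word_quat (xb # ws)))"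
    unfolding step k(2)
    by (simp add: psi_mat_inverse[OF cd nx] mat_scale_mult_left mat_scale_mult_right
        mat_scale_mat_scale psi_mat_qmult[OF cd] letter_quat_def word_quat_def xb)
  moreover have "(if b then 1 / of_int (qnorm x) else 1) * k \<noteq> 0" using k(1) nx by simp
  ultimately show ?case by blast
qed

locale psi_embedding =
  fixes cp dp :: "'a::field_char_0" and cl dl :: "'b::field_char_0"
  assumes cp_dp: "cp^2 + dp^2 + 1 = 0" and cl_dl: "cl^2 + dl^2 + 1 = 0"
begin

abbreviation \<psi> :: "quat \<Rightarrow> ('a^2^2) \<times> ('b^2^2)" where
  "\<psi> \<equiv> psi cp dp cl dl"

abbreviation word :: "(quat \<times> bool) list \<Rightarrow> ('a^2^2) \<times> ('b^2^2)" where
  "word \<equiv> word_prod cp dp cl dl"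

lemma gmul_psi: "gmul (\<psi> x) (\<psi> y) = \<psi> (qmult x y)"
  by (simp add: gmul_def psi_def psi_mat_qmult[OF cp_dp] psi_mat_qmult[OF cl_dl])

lemma G_eq_psi_if_qproportional: "qproportional u v \<Longrightarrow> G_eq (\<psi> u) (\<psi> v)"
  by (simp add: G_eq_def psi_def pgl_eq_psi_mat_if_qproportional)

lemma qproportional_if_G_eq_psi: "G_eq (\<psi> u) (\<psi> v) \<Longrightarrow> v \<noteq> 0 \<Longrightarrow> qproportional u v"
  by (simp add: G_eq_def psi_def qproportional_if_pgl_eq_psi_mat[OF cp_dp])

lemma G_eq_psi_scalar_gone: "z \<noteq> 0 \<Longrightarrow> G_eq (\<psi> (z,0,0,0)) gone"
  by (simp add: G_eq_def psi_def gone_def pgl_eq_iff mat2_eq_iff psi_mat_nth)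

lemma G_eq_word_psi_word_quat:
  assumes "\<forall>x\<in>set (map fst ws). qnorm x \<noteq> 0"
  shows "G_eq (word ws) (\<psi> (word_quat ws))"
proof -
  obtain k1 where "k1 \<noteq> 0" "word_mat cp dp ws = mat_scale k1 (psi_mat cp dp (word_quat ws))"
    using word_mat_eq_mat_scale[OF cp_dp assms] by blast
  moreover obtain k2 where "k2 \<noteq> 0" "word_mat cl dl ws = mat_scale k2 (psi_mat cl dl (word_quat ws))"
    using word_mat_eq_mat_scale[OF cl_dl assms] by blast
  ultimately show ?thesis
    by (simp add: G_eq_def word_prod_eq_word_mat psi_def pgl_eq_mat_scale_left pgl_eq_refl)
qed

end

section \<open>Divisibility of products by an odd prime\<close>

lemma odd_prime_not_dvd_2:
  fixes q :: int
  assumes "prime q" "odd q"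
  shows "\<not> q dvd 2"
proof
  assume "q dvd 2"
  then have "q \<le> 2" by (simp add: zdvd_imp_le)
  with prime_ge_2_int[OF assms(1)] have "q = 2" by simp
  with assms(2) show False by simp
qed

lemma exists_qre_qmult_not_dvd:
  fixes q :: int
  assumes q: "prime q" "odd q" and "\<not> qdvd q a"
  shows "\<exists>e. \<not> q dvd 2 * qre (qmult a e)"
proof -
  obtain a0 a1 a2 a3 where a: "a = (a0,a1,a2,a3)" by (cases a rule: prod_cases4)
  have not_dvd: "\<not> q dvd 2 * x" if "\<not> q dvd x" for x
    using that odd_prime_not_dvd_2[OF q] prime_dvd_mult_iff[OF q(1)] by blast
  from assms(3) consider "\<not> q dvd a0" | "\<not> q dvd a1" | "\<not> q dvd a2" | "\<not> q dvd a3"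
    unfolding a by auto
  then show ?thesis
  proof cases
    case 1 then show ?thesis using not_dvd by (intro exI[of _ "(1,0,0,0)"]) (simp add: a)
  next
    case 2 then show ?thesis using not_dvd by (intro exI[of _ "(0,-1,0,0)"]) (simp add: a)
  next
    case 3 then show ?thesis using not_dvd by (intro exI[of _ "(0,0,-1,0)"]) (simp add: a)
  next
    case 4 then show ?thesis using not_dvd by (intro exI[of _ "(0,0,0,-1)"]) (simp add: a)
  qed
qed

lemma qdvd_of_qdvd_diff_qscale:
  fixes q :: int
  assumes "prime q" "q dvd n" "\<not> q dvd t" "qdvd q (qscale t a - qscale n b)"
  shows "qdvd q a"
proof -
  have cancel: "q dvd x" if "q dvd t * x - n * y" for x y
  proof -
    have "q dvd (t * x - n * y) + n * y" using that assms(2) by (intro dvd_add dvd_mult2)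
    then have "q dvd t * x" by simp
    with assms(1,3) show ?thesis by (simp add: prime_dvd_mult_iff)
  qed
  obtain a0 a1 a2 a3 where a: "a = (a0,a1,a2,a3)" by (cases a rule: prod_cases4)
  obtain b0 b1 b2 b3 where b: "b = (b0,b1,b2,b3)" by (cases b rule: prod_cases4)
  from assms(4) have "q dvd t * a0 - n * b0" "q dvd t * a1 - n * b1"
    "q dvd t * a2 - n * b2" "q dvd t * a3 - n * b3"
    unfolding a b by simp_all
  then show ?thesis unfolding a qdvd_simp by (blast intro: cancel)
qed

text \<open>If \<open>q\<close> divides \<open>z u w\<close> but not \<open>u w\<close>, pick \<open>e\<close> with \<open>tr(u w e)\<close> prime to \<open>q\<close>; then
  \<open>z u w e u = tr(u w e) z u - N(u) z conj(w e)\<close> and \<open>q | N(u)\<close> force \<open>q | z u\<close>.\<close>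
lemma qdvd_qmult_split:
  fixes q :: int
  assumes q: "prime q" "odd q" and "q dvd qnorm u" and "qdvd q (qmult (qmult z u) w)"
  shows "qdvd q (qmult z u) \<or> qdvd q (qmult u w)"
proof (rule disjCI)
  assume "\<not> qdvd q (qmult u w)"
  then obtain e where e: "\<not> q dvd 2 * qre (qmult (qmult u w) e)"
    using exists_qre_qmult_not_dvd[OF q] by blast
  define t where "t = qmult w e"
  have "qmult (qmult (qmult z u) w) (qmult e u) = qmult z (qmult u (qmult t u))"
    unfolding t_def by (simp add: qmult_assoc)
  also have "\<dots> = qscale (2 * qre (qmult u t)) (qmult z u) - qscale (qnorm u) (qmult z (qconj t))"
    unfolding qmult_sandwich qmult_diff_right qmult_qscale_right ..
  finally have "qdvd q (qscale (2 * qre (qmult u t)) (qmult z u) - qscale (qnorm u) (qmult z (qconj t)))"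
    using qdvd_qmult_left[OF assms(4)] by metis
  moreover have "qmult u t = qmult (qmult u w) e" by (simp add: t_def qmult_assoc)
  ultimately show "qdvd q (qmult z u)"
    using qdvd_of_qdvd_diff_qscale[OF q(1) assms(3)] e by auto
qed

lemma not_qdvd_if_qnorm_prime:
  fixes q :: int
  assumes "prime q" "qnorm x = q"
  shows "\<not> qdvd q x"
proof
  assume "qdvd q x"
  then have "q^2 dvd q" using qdvd_imp_sq_dvd_qnorm assms(2) by metis
  with prime_ge_2_int[OF assms(1)] show False by (simp add: power2_eq_square)
qed

lemma qdvd_qprod_adjacent:
  fixes q :: int
  assumes q: "prime q" "odd q" and "\<forall>y\<in>set ys. qnorm y = q" and "qdvd q (qprod ys)"
  shows "\<exists>i. Suc i < length ys \<and> qdvd q (qmult (ys ! i) (ys ! Suc i))"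
  using assms(3,4)
proof (induction ys rule: rev_induct)
  case Nil
  then show ?case using prime_ge_2_int[OF q(1)] by (simp add: qone_def)
next
  case (snoc w ys)
  have norms: "\<forall>y\<in>set ys. qnorm y = q" "qnorm w = q"
    and dvd: "qdvd q (qmult (qprod ys) w)"
    using snoc.prems by (simp_all add: qprod_append)
  show ?case
  proof (cases "qdvd q (qprod ys)")
    case True
    with snoc.IH norms obtain i where "Suc i < length ys" "qdvd q (qmult (ys ! i) (ys ! Suc i))"
      by auto
    then show ?thesis by (intro exI[of _ i]) (simp add: nth_append)
  next
    case False
    show ?thesis
    proof (cases ys rule: rev_cases)
      case Nil
      then show ?thesis using dvd norms not_qdvd_if_qnorm_prime[OF q(1)] by simp
    next
      case (snoc zs u)
      then have "qdvd q (qmult (qmult (qprod zs) u) w)" "q dvd qnorm u"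
        using dvd norms by (simp_all add: qprod_append)
      then have "qdvd q (qmult (qprod zs) u) \<or> qdvd q (qmult u w)"
        by (rule qdvd_qmult_split[OF q, rotated])
      then have "qdvd q (qmult u w)"
        using False \<open>ys = zs @ [u]\<close> by (auto simp: qprod_append)
      then show ?thesis using \<open>ys = zs @ [u]\<close> by (intro exI[of _ "length zs"]) (simp add: nth_append)
    qed
  qed
qed

section \<open>Generators and reduced words\<close>

definition generators :: "nat \<Rightarrow> nat \<Rightarrow> nat \<Rightarrow> quat set" where
  "generators p l q = {x. in_Gamma_tilde p l x \<and> qre x > 0 \<and> qnorm x = int q}"

lemma qnorm_generator: "x \<in> generators p l q \<Longrightarrow> qnorm x = int q"
  by (simp add: generators_def)

lemma qconj_mem_generators_iff: "qconj x \<in> generators p l q \<longleftrightarrow> x \<in> generators p l q"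
  by (cases x rule: prod_cases4) (simp add: generators_def in_Gamma_tilde_def)

lemma letter_quat_generator: "fst xb \<in> generators p l q \<Longrightarrow> letter_quat xb \<in> generators p l q"
  by (simp add: letter_quat_def qconj_mem_generators_iff)

lemma generator_parity:
  assumes "(a0,a1,a2,a3) \<in> generators p l q" "odd q"
  shows "odd a0 \<and> even a1 \<and> (even a2 \<longleftrightarrow> even a3)"
proof -
  have "int q mod 4 = 1 \<or> int q mod 4 = 3" using \<open>odd q\<close> by presburger
  with assms(1) show ?thesis unfolding generators_def in_Gamma_tilde_def by auto
qed

lemma qnorm_eq_1_cases:
  assumes "qnorm e = 1"
  shows "e \<in> {(1,0,0,0), (-1,0,0,0), (0,1,0,0), (0,-1,0,0),
              (0,0,1,0), (0,0,-1,0), (0,0,0,1), (0,0,0,-1)}"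
proof (cases e rule: prod_cases4)
  case (fields a b c d)
  have unit_range: "x \<in> {-1,0,1}" if "x^2 \<le> 1" for x :: int
    using that abs_square_le_1[of x] by auto
  have "a^2 + b^2 + c^2 + d^2 = 1" using assms fields by simp
  then have "a^2 \<le> 1" "b^2 \<le> 1" "c^2 \<le> 1" "d^2 \<le> 1"
    by (smt (verit) zero_le_power2)+
  then have "a \<in> {-1,0,1}" "b \<in> {-1,0,1}" "c \<in> {-1,0,1}" "d \<in> {-1,0,1}"
    using unit_range by blast+
  with \<open>a^2 + b^2 + c^2 + d^2 = 1\<close> show ?thesis unfolding fields by (elim insertE emptyE; simp)
qed

text \<open>This is where the parity conditions in the definition of \<open>\<Gamma>\<close> are needed.\<close>
lemma generator_qmult_unit:
  assumes "a \<in> generators p l q" "b \<in> generators p l q" "odd q"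
    and "b = qmult a e" "qnorm e = 1"
  shows "e = qone"
proof -
  obtain a0 a1 a2 a3 where a: "a = (a0,a1,a2,a3)" by (cases a rule: prod_cases4)
  obtain b0 b1 b2 b3 where b: "b = (b0,b1,b2,b3)" by (cases b rule: prod_cases4)
  have "odd a0 \<and> even a1 \<and> (even a2 \<longleftrightarrow> even a3)" "odd b0 \<and> even b1 \<and> (even b2 \<longleftrightarrow> even b3)"
    using generator_parity assms(1-3) a b by blast+
  moreover have "a0 > 0" "b0 > 0" using assms(1,2) a b by (simp_all add: generators_def)
  moreover have "(b0,b1,b2,b3) = qmult (a0,a1,a2,a3) e" using assms(4) a b by simp
  ultimately show ?thesis
    using qnorm_eq_1_cases[OF assms(5)] by (elim insertE emptyE) (simp_all add: qone_def)
qed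

lemma generators_qdvd_qmult_imp_qconj:
  assumes q: "prime q" "odd q" and ab: "a \<in> generators p l q" "b \<in> generators p l q"
    and "qdvd (int q) (qmult a b)"
  shows "b = qconj a"
proof -
  obtain e where e: "qmult a b = qscale (int q) e" using assms(5) by (rule qdvdE)
  have na: "qnorm a = int q" and nb: "qnorm b = int q" using ab by (simp_all add: qnorm_generator)
  have q0: "int q \<noteq> 0" using q(1) by auto
  have "qscale (int q) b = qmult (qmult (qconj a) a) b"
    by (simp add: qmult_qconj_left qmult_qscale_left na)
  also have "\<dots> = qscale (int q) (qmult (qconj a) e)"
    by (simp add: qmult_assoc e qmult_qscale_right)
  finally have b: "b = qmult (qconj a) e" using qscale_cancel[OF q0] by blast
  then have "qnorm e = 1" using qnorm_qmult[of "qconj a" e] na nb q0 by simp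
  have "qconj a \<in> generators p l q" using ab(1) by (simp add: qconj_mem_generators_iff)
  then have "e = qone" using generator_qmult_unit ab(2) q(2) b \<open>qnorm e = 1\<close> by blast
  then show ?thesis using b by simp
qed

lemma list_split_adjacent:
  "Suc i < length ws \<Longrightarrow> ws = take i ws @ ws ! i # ws ! Suc i # drop (Suc (Suc i)) ws"
  by (metis Cons_nth_drop_Suc Suc_lessD append_take_drop_id)

lemma reduce_word_step:
  assumes q: "prime q" "odd q" and ws: "set (map fst ws) \<subseteq> generators p l q"
    and dvd: "qdvd (int q) (word_quat ws)"
  obtains ws0 where "set (map fst ws0) \<subseteq> generators p l q"
    "word_quat ws = qscale (int q) (word_quat ws0)" "length ws = length ws0 + 2"
proof -
  have gen: "letter_quat xb \<in> generators p l q" if "xb \<in> set ws" for xb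
    using ws that by (intro letter_quat_generator) auto
  then have "\<forall>y\<in>set (map letter_quat ws). qnorm y = int q"
    unfolding set_map using qnorm_generator by blast
  then have "\<exists>i. Suc i < length (map letter_quat ws) \<and>
      qdvd (int q) (qmult (map letter_quat ws ! i) (map letter_quat ws ! Suc i))"
    by (rule qdvd_qprod_adjacent[rotated 2]) (use q dvd in \<open>simp_all add: word_quat_def\<close>)
  then obtain i where i: "Suc i < length ws"
    "qdvd (int q) (qmult (letter_quat (ws ! i)) (letter_quat (ws ! Suc i)))"
    by auto
  have g: "letter_quat (ws ! i) \<in> generators p l q" "letter_quat (ws ! Suc i) \<in> generators p l q"
    using i(1) gen by auto
  have conj: "letter_quat (ws ! Suc i) = qconj (letter_quat (ws ! i))"
    using generators_qdvd_qmult_imp_qconj[OF q g i(2)] .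
  have norm: "qnorm (fst (ws ! i)) = int q"
    using qnorm_generator[OF g(1)] by simp
  define ws0 where "ws0 = take i ws @ drop (Suc (Suc i)) ws"
  have "word_quat ws = word_quat (take i ws @ [ws ! i, ws ! Suc i] @ drop (Suc (Suc i)) ws)"
    using list_split_adjacent[OF i(1)] by simp
  also have "\<dots> = qscale (int q) (word_quat ws0)"
    unfolding word_quat_append ws0_def
    by (simp add: word_quat_def conj qmult_qconj_right norm qmult_qscale_left
        qmult_qscale_right flip: qmult_assoc)
  finally have "word_quat ws = qscale (int q) (word_quat ws0)" .
  moreover have "set (map fst ws0) \<subseteq> generators p l q"
    using ws by (auto simp: ws0_def dest: in_set_takeD in_set_dropD)
  moreover have "length ws = length ws0 + 2" using i(1) by (simp add: ws0_def)
  ultimately show thesis using that by blast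
qed

lemma exists_reduced_word:
  assumes q: "prime q" "odd q" and "set (map fst ws) \<subseteq> generators p l q"
  shows "\<exists>ws' m. set (map fst ws') \<subseteq> generators p l q
    \<and> word_quat ws = qscale (int q ^ m) (word_quat ws')
    \<and> \<not> qdvd (int q) (word_quat ws') \<and> length ws = length ws' + 2 * m"
  using assms(3)
proof (induction "length ws" arbitrary: ws rule: less_induct)
  case less
  show ?case
  proof (cases "qdvd (int q) (word_quat ws)")
    case False
    then show ?thesis using less.prems by (intro exI[of _ ws] exI[of _ 0]) simp
  next
    case True
    then obtain ws0 where ws0: "set (map fst ws0) \<subseteq> generators p l q"
      "word_quat ws = qscale (int q) (word_quat ws0)" "length ws = length ws0 + 2"
      using reduce_word_step[OF q less.prems] by blast
    then obtain ws' m where "set (map fst ws') \<subseteq> generators p l q"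
      "word_quat ws0 = qscale (int q ^ m) (word_quat ws')"
      "\<not> qdvd (int q) (word_quat ws')" "length ws0 = length ws' + 2 * m"
      using less.hyps[of ws0] by auto
    with ws0 show ?thesis
      by (intro exI[of _ ws'] exI[of _ "Suc m"]) (auto simp: qscale_qscale)
  qed
qed

section \<open>Norms of words and a lower bound for word length\<close>

lemma qnorm_word_quat:
  assumes "\<forall>x\<in>set (map fst ws). qnorm x = int q \<or> qnorm x = int q'"
  shows "\<exists>a b. qnorm (word_quat ws) = int q ^ a * int q' ^ b \<and> a + b = length ws"
  using assms
proof (induction ws)
  case Nil
  then show ?case by (simp add: word_quat_def)
next
  case (Cons xb ws)
  then obtain a b where ab: "qnorm (word_quat ws) = int q ^ a * int q' ^ b" "a + b = length ws"
    by auto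
  have "word_quat (xb # ws) = qmult (letter_quat xb) (word_quat ws)"
    by (simp add: word_quat_def)
  then have norm: "qnorm (word_quat (xb # ws)) = qnorm (fst xb) * qnorm (word_quat ws)"
    by (simp add: qnorm_qmult)
  from Cons.prems consider "qnorm (fst xb) = int q" | "qnorm (fst xb) = int q'" by auto
  then show ?case
  proof cases
    case 1
    then show ?thesis using ab norm by (intro exI[of _ "Suc a"] exI[of _ b]) simp
  next
    case 2
    then show ?thesis using ab norm by (intro exI[of _ a] exI[of _ "Suc b"]) simp
  qed
qed

lemma qnorm_word_quat_single_prime:
  assumes "\<forall>x\<in>set (map fst ws). qnorm x = int q"
  shows "qnorm (word_quat ws) = int q ^ length ws"
  using qnorm_word_quat[of ws q q] assms by (auto simp flip: power_add)

lemma multiplicity_le_if_mult_eq: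
  fixes q :: nat and m n y z :: int
  assumes "prime q" "m \<noteq> 0" "m * z = n * y" "\<not> int q dvd z"
  shows "multiplicity (int q) n \<le> multiplicity (int q) m"
proof -
  have "int q ^ multiplicity (int q) n dvd m * z"
    using multiplicity_dvd[of "int q" n] assms(3) by (metis dvd_mult2)
  moreover have "coprime (int q ^ multiplicity (int q) n) z"
    using prime_imp_coprime[of "int q" z] assms(1,4) by simp
  ultimately have "int q ^ multiplicity (int q) n dvd m"
    using coprime_dvd_mult_left_iff by blast
  moreover have "\<not> is_unit (int q)" using assms(1) by auto
  ultimately show ?thesis using multiplicity_geI[OF assms(2)] by blast
qed

text \<open>Compare the \<open>q\<close>-adic valuations of the norms of \<open>m Z1 = n Z2\<close>; since \<open>q\<close> does not
  divide \<open>Z1\<close>, the valuation of \<open>n\<close> is at most that of \<open>m\<close>.\<close>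
lemma exponent_le_if_qproportional:
  fixes q q' :: nat
  assumes q: "prime q" "prime q'" "q \<noteq> q'" and "qproportional Z1 Z2"
    and "qnorm Z1 = int q ^ r" "\<not> qdvd (int q) Z1" "qnorm Z2 = int q ^ a * int q' ^ b"
  shows "r \<le> a"
proof -
  obtain m n where mn: "m \<noteq> 0" "n \<noteq> 0" "qscale m Z1 = qscale n Z2"
    using assms(4) unfolding qproportional_def by blast
  have pe: "prime_elem (int q)" using q(1) by simp
  have q0: "int q \<noteq> 0" "int q' \<noteq> 0" using q by auto
  let ?v = "multiplicity (int q)"
  have v_q': "?v (int q' ^ b) = 0"
    using prime_multiplicity_other[of "int q" "int q'"] q
    by (simp add: prime_elem_multiplicity_power_distrib[OF pe q0(2)])
  have "m^2 * int q ^ r = n^2 * (int q ^ a * int q' ^ b)"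
    using arg_cong[OF mn(3), of qnorm] assms(5,7) by (simp add: qnorm_qscale)
  then have "?v (m^2 * int q ^ r) = ?v (n^2 * (int q ^ a * int q' ^ b))" by simp
  then have "2 * ?v m + r = 2 * ?v n + a"
    using mn(1,2) q0 v_q'
    by (simp add: prime_elem_multiplicity_mult_distrib[OF pe] multiplicity_prime_power[OF pe]
        prime_elem_multiplicity_power_distrib[OF pe])
  moreover have "?v n \<le> ?v m"
  proof -
    obtain a0 a1 a2 a3 where Z1: "Z1 = (a0,a1,a2,a3)" by (cases Z1 rule: prod_cases4)
    obtain b0 b1 b2 b3 where Z2: "Z2 = (b0,b1,b2,b3)" by (cases Z2 rule: prod_cases4)
    have "m * a0 = n * b0" "m * a1 = n * b1" "m * a2 = n * b2" "m * a3 = n * b3"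
      using mn(3) Z1 Z2 by simp_all
    moreover have "\<not> int q dvd a0 \<or> \<not> int q dvd a1 \<or> \<not> int q dvd a2 \<or> \<not> int q dvd a3"
      using assms(6) Z1 by simp
    ultimately show ?thesis using multiplicity_le_if_mult_eq[OF q(1) mn(1)] by blast
  qed
  ultimately show ?thesis by linarith
qed

section \<open>The invariant \<open>n(x)\<close>\<close>

lemma gcd3_mult: "gcd (gcd (z * c1) (z * c2)) (z * c3) = \<bar>z\<bar> * gcd (gcd c1 c2) (c3::int)"
proof -
  have "gcd (gcd (z * c1) (z * c2)) (z * c3) = gcd (z * gcd c1 c2) (z * c3)"
    by (simp add: gcd_mult_left)
  also have "\<dots> = \<bar>z * gcd (gcd c1 c2) c3\<bar>" by (simp add: gcd_mult_left)
  finally show ?thesis by (simp add: abs_mult)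
qed

lemma nval_eqI:
  assumes "z \<noteq> 0" "gcd (gcd c1 c2) c3 = 1"
  shows "nval (x0, z * c1, z * c2, z * c3) = c1^2 + c2^2 + c3^2"
  unfolding nval_def prod.case
proof (rule the_equality)
  show "\<exists>z' d1 d2 d3. z' \<noteq> 0 \<and> gcd (gcd d1 d2) d3 = 1 \<and> z * c1 = z' * d1 \<and>
      z * c2 = z' * d2 \<and> z * c3 = z' * d3 \<and> c1^2 + c2^2 + c3^2 = d1^2 + d2^2 + d3^2"
    using assms by (intro exI[of _ z] exI[of _ c1] exI[of _ c2] exI[of _ c3]) simp
next
  fix m
  assume "\<exists>z' d1 d2 d3. z' \<noteq> 0 \<and> gcd (gcd d1 d2) d3 = 1 \<and> z * c1 = z' * d1 \<and>
      z * c2 = z' * d2 \<and> z * c3 = z' * d3 \<and> m = d1^2 + d2^2 + d3^2"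
  then show "m = c1^2 + c2^2 + c3^2"
  proof (elim exE conjE)
    fix z' d1 d2 d3
    assume d: "z' \<noteq> 0" "gcd (gcd d1 d2) d3 = 1"
      "z * c1 = z' * d1" "z * c2 = z' * d2" "z * c3 = z' * d3" "m = d1^2 + d2^2 + d3^2"
    have "\<bar>z\<bar> = \<bar>z'\<bar>"
      using gcd3_mult[of z c1 c2 c3] gcd3_mult[of z' d1 d2 d3] d(2-5) assms(2) by simp
    then have z_sq: "z'^2 = z^2" by (metis power2_abs)
    have "m * z'^2 = (z' * d1)^2 + (z' * d2)^2 + (z' * d3)^2"
      using d(6) by (simp add: algebra_simps power_mult_distrib)
    also have "\<dots> = (z * c1)^2 + (z * c2)^2 + (z * c3)^2"
      using d(3-5) by simp
    also have "\<dots> = (c1^2 + c2^2 + c3^2) * z'^2"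
      using z_sq by (simp add: algebra_simps power_mult_distrib)
    finally show "m = c1^2 + c2^2 + c3^2" using assms(1) z_sq by simp
  qed
qed

lemma exists_primitive_vector:
  fixes x1 x2 x3 :: int
  assumes "(x1, x2, x3) \<noteq> (0, 0, 0)"
  obtains g c1 c2 c3 where "g \<noteq> 0" "gcd (gcd c1 c2) c3 = 1"
    "x1 = g * c1" "x2 = g * c2" "x3 = g * c3"
proof -
  define g where "g = gcd (gcd x1 x2) x3"
  have "g \<noteq> 0" using assms by (auto simp: g_def)
  have "g dvd x1" "g dvd x2" "g dvd x3"
    unfolding g_def by (rule dvd_trans[OF gcd_dvd1 gcd_dvd1] dvd_trans[OF gcd_dvd1 gcd_dvd2] gcd_dvd2)+
  then obtain c1 c2 c3 where c: "x1 = g * c1" "x2 = g * c2" "x3 = g * c3"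
    by (elim dvdE)
  have "g = gcd (gcd (g * c1) (g * c2)) (g * c3)" by (simp only: c[symmetric] g_def[symmetric])
  then have "g = \<bar>g\<bar> * gcd (gcd c1 c2) c3" by (simp only: gcd3_mult)
  moreover have "g > 0" using \<open>g \<noteq> 0\<close> gcd_ge_0_int[of "gcd x1 x2" x3] unfolding g_def by linarith
  ultimately have "gcd (gcd c1 c2) c3 = 1" by simp
  with \<open>g \<noteq> 0\<close> show thesis using c by (rule that)
qed

lemma nval_qscale:
  assumes "k \<noteq> 0" "x = (x0, x1, x2, x3)" "(x1, x2, x3) \<noteq> (0, 0, 0)"
  shows "nval (qscale k x) = nval x"
proof -
  obtain g c1 c2 c3 where "g \<noteq> 0" "gcd (gcd c1 c2) c3 = 1" "x1 = g * c1" "x2 = g * c2" "x3 = g * c3"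
    using exists_primitive_vector[OF assms(3)] .
  with assms(1,2) show ?thesis
    using nval_eqI[of g c1 c2 c3 x0] nval_eqI[of "k * g" c1 c2 c3 "k * x0"] by (simp add: mult.assoc)
qed

lemma nval_qproportional:
  assumes "qproportional x y" "y = (y0, y1, y2, y3)" "(y1, y2, y3) \<noteq> (0, 0, 0)"
  shows "nval x = nval y"
proof -
  obtain m n where mn: "m \<noteq> 0" "n \<noteq> 0" "qscale m x = qscale n y"
    using assms(1) unfolding qproportional_def by blast
  obtain x0 x1 x2 x3 where x: "x = (x0, x1, x2, x3)" by (cases x rule: prod_cases4)
  have "(x1, x2, x3) \<noteq> (0, 0, 0)" using mn assms(2,3) x by auto
  then have "nval x = nval (qscale m x)" using nval_qscale[OF mn(1) x] by simp
  also have "\<dots> = nval y" using nval_qscale[OF mn(2) assms(2,3)] mn(3) by simp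
  finally show ?thesis .
qed

section \<open>The quadratic character of \<open>-n(x)\<close>\<close>

lemma prime_dvd_sum_sq_cases:
  fixes q z g n :: int
  assumes q: "prime q" and dvd: "q dvd z^2 + g^2 * n" and prim: "\<not> (q dvd z \<and> q dvd g)"
  shows "q dvd n \<longleftrightarrow> q dvd z" and "\<not> q dvd n \<Longrightarrow> \<not> q dvd g"
proof -
  have sq: "q dvd x^2 \<longleftrightarrow> q dvd x" for x
    using q by (simp add: prime_dvd_power_iff)
  have z_iff: "q dvd z^2 \<longleftrightarrow> q dvd g^2 * n"
    using dvd dvd_add_right_iff dvd_add_left_iff by blast
  have gn_iff: "q dvd g^2 * n \<longleftrightarrow> q dvd g \<or> q dvd n"
    using q by (simp add: prime_dvd_mult_iff sq)
  show "q dvd n \<longleftrightarrow> q dvd z" using z_iff gn_iff sq prim by blast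
  show "\<not> q dvd g" if "\<not> q dvd n" using that z_iff gn_iff sq prim by blast
qed

lemma Legendre_neg_eq_1_iff:
  fixes q z g n :: int
  assumes q: "prime q" and dvd: "q dvd z^2 + g^2 * n" and prim: "\<not> (q dvd z \<and> q dvd g)"
  shows "Legendre (- n) q = 1 \<longleftrightarrow> \<not> q dvd n"
proof (cases "q dvd n")
  case True
  then show ?thesis by (simp add: Legendre_def cong_0_iff)
next
  case False
  have "coprime g q"
    using prime_dvd_sum_sq_cases(2)[OF assms False] prime_imp_coprime[OF q]
    by (simp add: coprime_commute)
  then obtain h where "[g * h = 1] (mod q)" using cong_solve_coprime_int by blast
  then have h: "q dvd g * h - 1" by (simp add: cong_iff_dvd_diff)
  have "(z * h)^2 + n = (z^2 + g^2 * n) * h^2 - n * ((g * h - 1) * (g * h + 1))"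
    by (simp add: algebra_simps power2_eq_square)
  also have "q dvd \<dots>" using dvd h by simp
  finally have "[(z * h)^2 = - n] (mod q)" by (simp add: cong_iff_dvd_diff)
  then have "QuadRes q (- n)" unfolding QuadRes_def by blast
  with False show ?thesis by (simp add: Legendre_def cong_0_iff)
qed

lemma qdvd_qmult_self_iff:
  fixes q :: int
  assumes q: "prime q" "odd q" and Z: "Z = (z, g * c1, g * c2, g * c3)"
    and c: "gcd (gcd c1 c2) c3 = 1" and "q dvd qnorm Z" and "\<not> qdvd q Z"
  shows "qdvd q (qmult Z Z) \<longleftrightarrow> q dvd c1^2 + c2^2 + c3^2"
proof -
  define n where "n = c1^2 + c2^2 + c3^2"
  have dvd: "q dvd z^2 + g^2 * n"
    using assms(5) Z by (simp add: n_def algebra_simps power_mult_distrib)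
  have prim: "\<not> (q dvd z \<and> q dvd g)" using assms(6) Z by auto
  have ZZ: "qmult Z Z = (z^2 - g^2 * n, 2 * z * g * c1, 2 * z * g * c2, 2 * z * g * c3)"
    using Z by (simp add: n_def algebra_simps power2_eq_square)
  have "qdvd q (qmult Z Z) \<longleftrightarrow> q dvd n"
  proof
    assume "q dvd n"
    moreover have "q dvd z" using \<open>q dvd n\<close> prime_dvd_sum_sq_cases(1)[OF q(1) dvd prim] by simp
    ultimately have "q dvd z^2 - g^2 * n" by (intro dvd_diff) (simp_all add: power2_eq_square)
    with \<open>q dvd z\<close> show "qdvd q (qmult Z Z)" unfolding ZZ by simp
  next
    assume "qdvd q (qmult Z Z)"
    show "q dvd n"
    proof (rule ccontr)
      assume "\<not> q dvd n"
      then have "\<not> q dvd 2 * z * g"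
        using prime_dvd_sum_sq_cases[OF q(1) dvd prim] odd_prime_not_dvd_2[OF q] q(1)
        by (simp add: prime_dvd_mult_iff)
      moreover have "\<not> (q dvd c1 \<and> q dvd c2 \<and> q dvd c3)"
      proof
        assume "q dvd c1 \<and> q dvd c2 \<and> q dvd c3"
        then have "q dvd gcd (gcd c1 c2) c3" by simp
        with c prime_ge_2_int[OF q(1)] show False by simp
      qed
      ultimately show False
        using \<open>qdvd q (qmult Z Z)\<close> q(1) unfolding ZZ by (auto simp: prime_dvd_mult_iff)
    qed
  qed
  then show ?thesis by (simp add: n_def)
qed

lemma primitive_quat_square_characterization:
  fixes q :: int
  assumes q: "prime q" "odd q" and Z: "Z = (z, v1, v2, v3)" and v: "(v1, v2, v3) \<noteq> (0, 0, 0)"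
    and "q dvd qnorm Z" and "\<not> qdvd q Z"
  shows "qdvd q (qmult Z Z) \<longleftrightarrow> q dvd nval Z"
    and "Legendre (- nval Z) q = 1 \<longleftrightarrow> \<not> q dvd nval Z"
proof -
  obtain g c1 c2 c3 where g: "g \<noteq> 0" "gcd (gcd c1 c2) c3 = 1"
    and v_eq: "v1 = g * c1" "v2 = g * c2" "v3 = g * c3"
    using exists_primitive_vector[OF v] .
  have Z': "Z = (z, g * c1, g * c2, g * c3)" using Z v_eq by simp
  have nval_Z: "nval Z = c1^2 + c2^2 + c3^2" using nval_eqI[OF g] Z' by simp
  show "qdvd q (qmult Z Z) \<longleftrightarrow> q dvd nval Z"
    using qdvd_qmult_self_iff[OF q Z' g(2) assms(5,6)] nval_Z by simp
  have "q dvd z^2 + g^2 * nval Z"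
    using assms(5) Z' nval_Z by (simp add: algebra_simps power_mult_distrib)
  moreover have "\<not> (q dvd z \<and> q dvd g)" using assms(6) Z' by auto
  ultimately show "Legendre (- nval Z) q = 1 \<longleftrightarrow> \<not> q dvd nval Z"
    using Legendre_neg_eq_1_iff[OF q(1)] by blast
qed

section \<open>Word length in \<open>\<Gamma>\<^sub>q\<close>\<close>

lemma word_prod_Nil [simp]: "word_prod cp dp cl dl [] = gone"
  by (simp add: word_prod_def)

locale word_length_setting = psi_embedding cp dp cl dl
  for cp dp :: "'a::field_char_0" and cl dl :: "'b::field_char_0" +
  fixes p l q q' :: nat and S :: "quat set"
  assumes prime_q: "prime q" and prime_q': "prime q'" and q_neq_q': "q \<noteq> q'" and odd_q: "odd q"
    and qnorm_S: "\<forall>y\<in>S. qnorm y = int q \<or> qnorm y = int q'"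
    and generators_subset_S: "generators p l q \<subseteq> S"
begin

abbreviation wl :: "('a^2^2) \<times> ('b^2^2) \<Rightarrow> nat" where
  "wl \<equiv> word_length cp dp cl dl S"

lemma qnorm_ne_0_if_in_S:
  assumes "x \<in> S"
  shows "qnorm x \<noteq> 0"
proof -
  have "qnorm x = int q \<or> qnorm x = int q'" using assms qnorm_S by blast
  then show ?thesis using prime_gt_0_nat[OF prime_q] prime_gt_0_nat[OF prime_q'] by linarith
qed

lemma G_eq_word_psi_word_quat_S:
  assumes "set (map fst ws) \<subseteq> S"
  shows "G_eq (word ws) (\<psi> (word_quat ws))"
proof (rule G_eq_word_psi_word_quat)
  show "\<forall>x\<in>set (map fst ws). qnorm x \<noteq> 0" using assms qnorm_ne_0_if_in_S by blast
qed

lemma qnorm_word_quat_generators: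
  assumes "set (map fst ws) \<subseteq> generators p l q"
  shows "qnorm (word_quat ws) = int q ^ length ws"
proof (rule qnorm_word_quat_single_prime)
  show "\<forall>x\<in>set (map fst ws). qnorm x = int q" using assms qnorm_generator by blast
qed

lemma word_quat_ne_0:
  assumes "set (map fst ws) \<subseteq> generators p l q"
  shows "word_quat ws \<noteq> 0"
proof -
  have "qnorm (word_quat ws) \<noteq> 0"
    using qnorm_word_quat_generators[OF assms] prime_gt_0_nat[OF prime_q] by simp
  then show ?thesis by (simp add: qnorm_eq_0_iff)
qed

lemma word_length_reduced:
  assumes ws: "set (map fst ws) \<subseteq> generators p l q" "\<not> qdvd (int q) (word_quat ws)"
    and g: "G_eq (word ws) g"
  shows "wl g = length ws"
  unfolding word_length_def
proof (rule Least_equality)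
  show "\<exists>vs. length vs = length ws \<and> set (map fst vs) \<subseteq> S \<and> G_eq (word vs) g"
    using ws(1) g generators_subset_S by blast
next
  fix k
  assume "\<exists>vs. length vs = k \<and> set (map fst vs) \<subseteq> S \<and> G_eq (word vs) g"
  then obtain vs where vs: "length vs = k" "set (map fst vs) \<subseteq> S" "G_eq (word vs) g"
    by blast
  have norms: "\<forall>x\<in>set (map fst vs). qnorm x = int q \<or> qnorm x = int q'"
    using vs(2) qnorm_S by blast
  then obtain a b where ab: "qnorm (word_quat vs) = int q ^ a * int q' ^ b" "a + b = length vs"
    using qnorm_word_quat by blast
  have "G_eq (\<psi> (word_quat vs)) (word vs)"
    using G_eq_word_psi_word_quat_S[OF vs(2)] by (rule G_eq_sym)
  also note vs(3)
  also note G_eq_sym[OF g]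
  also have "G_eq (word ws) (\<psi> (word_quat ws))"
    using ws(1) generators_subset_S by (intro G_eq_word_psi_word_quat_S) simp
  finally have "G_eq (\<psi> (word_quat vs)) (\<psi> (word_quat ws))" .
  then have "qproportional (word_quat ws) (word_quat vs)"
    using word_quat_ne_0[OF ws(1)] by (rule qproportional_sym[OF qproportional_if_G_eq_psi])
  then have "length ws \<le> a"
    using exponent_le_if_qproportional[OF prime_q prime_q' q_neq_q' _
        qnorm_word_quat_generators[OF ws(1)] ws(2) ab(1)] by blast
  then show "length ws \<le> k" using ab(2) vs(1) by simp
qed

lemma exists_reduced_representative:
  assumes "in_generated cp dp cl dl (generators p l q) g"
  obtains ws where "set (map fst ws) \<subseteq> generators p l q" "\<not> qdvd (int q) (word_quat ws)"
    "G_eq (word ws) g"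
proof -
  obtain ws0 where ws0: "set (map fst ws0) \<subseteq> generators p l q" "G_eq (word ws0) g"
    using assms unfolding in_generated_def by blast
  obtain ws m where ws: "set (map fst ws) \<subseteq> generators p l q"
    "word_quat ws0 = qscale (int q ^ m) (word_quat ws)" "\<not> qdvd (int q) (word_quat ws)"
    using exists_reduced_word[OF prime_q odd_q ws0(1)] by blast
  have "G_eq (word ws) (\<psi> (word_quat ws))"
    using ws(1) generators_subset_S by (intro G_eq_word_psi_word_quat_S) simp
  also have "G_eq \<dots> (\<psi> (word_quat ws0))"
    unfolding ws(2) using prime_q
    by (intro G_eq_psi_if_qproportional qproportional_sym[OF qproportional_qscale]) simp
  also have "G_eq \<dots> (word ws0)"
    using ws0(1) generators_subset_S by (intro G_eq_sym[OF G_eq_word_psi_word_quat_S]) simp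
  also note ws0(2)
  finally show thesis using ws(1,3) that by blast
qed

lemma qproportional_word_quat:
  assumes ws: "set (map fst ws) \<subseteq> generators p l q" and x: "G_eq (word ws) (\<psi> x)"
  shows "qproportional x (word_quat ws)"
proof -
  have "G_eq (\<psi> x) (word ws)" using x by (rule G_eq_sym)
  also have "G_eq (word ws) (\<psi> (word_quat ws))"
    using ws generators_subset_S by (intro G_eq_word_psi_word_quat_S) simp
  finally show ?thesis using word_quat_ne_0[OF ws] by (rule qproportional_if_G_eq_psi)
qed

lemma word_length_square_iff:
  assumes ws: "set (map fst ws) \<subseteq> generators p l q" "\<not> qdvd (int q) (word_quat ws)"
    and x: "G_eq (word ws) (\<psi> x)"
  shows "wl (gmul (\<psi> x) (\<psi> x)) = 2 * wl (\<psi> x)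
    \<longleftrightarrow> \<not> qdvd (int q) (qmult (word_quat ws) (word_quat ws))"
proof -
  define Z where "Z = word_quat ws"
  have wl_x: "wl (\<psi> x) = length ws" using word_length_reduced[OF ws x] .
  have "qproportional x Z" unfolding Z_def using ws(1) x by (rule qproportional_word_quat)
  have "set (map fst (ws @ ws)) \<subseteq> generators p l q" using ws(1) by simp
  then obtain vs m where vs: "set (map fst vs) \<subseteq> generators p l q"
    "word_quat (ws @ ws) = qscale (int q ^ m) (word_quat vs)" "\<not> qdvd (int q) (word_quat vs)"
    "length (ws @ ws) = length vs + 2 * m"
    using exists_reduced_word[OF prime_q odd_q] by blast
  have ZZ: "qmult Z Z = qscale (int q ^ m) (word_quat vs)"
    using vs(2) by (simp add: Z_def word_quat_append)
  have "G_eq (word vs) (\<psi> (word_quat vs))"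
    using vs(1) generators_subset_S by (intro G_eq_word_psi_word_quat_S) simp
  also have "G_eq \<dots> (\<psi> (qmult Z Z))"
    unfolding ZZ using prime_q
    by (intro G_eq_psi_if_qproportional qproportional_sym[OF qproportional_qscale]) simp
  also have "G_eq \<dots> (\<psi> (qmult x x))"
    using \<open>qproportional x Z\<close>
    by (rule G_eq_psi_if_qproportional[OF qproportional_square[OF qproportional_sym]])
  finally have "wl (gmul (\<psi> x) (\<psi> x)) = length vs"
    using word_length_reduced[OF vs(1,3)] by (simp add: gmul_psi)
  moreover have "qdvd (int q) (qmult Z Z) \<longleftrightarrow> m \<noteq> 0"
  proof
    assume "m \<noteq> 0"
    then have "qmult Z Z = qscale (int q) (qscale (int q ^ (m - 1)) (word_quat vs))"
      using ZZ by (simp add: qscale_qscale power_eq_if)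
    then show "qdvd (int q) (qmult Z Z)" by (simp add: qdvd_qscale)
  qed (use ZZ vs(3) in \<open>cases m; simp\<close>)
  ultimately show ?thesis using wl_x vs(4) by (auto simp: Z_def)
qed

lemma word_length_square_characterization:
  assumes x: "in_generated cp dp cl dl (generators p l q) (\<psi> x)" "\<not> G_eq (\<psi> x) gone"
  shows "(\<not> int q dvd nval x \<longleftrightarrow> wl (gmul (\<psi> x) (\<psi> x)) = 2 * wl (\<psi> x))
    \<and> (wl (gmul (\<psi> x) (\<psi> x)) = 2 * wl (\<psi> x) \<longleftrightarrow> Legendre (- nval x) (int q) = 1)"
proof -
  obtain ws where ws: "set (map fst ws) \<subseteq> generators p l q" "\<not> qdvd (int q) (word_quat ws)"
    "G_eq (word ws) (\<psi> x)"
    using exists_reduced_representative[OF x(1)] .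
  define Z where "Z = word_quat ws"
  obtain z v1 v2 v3 where Z_eq: "Z = (z, v1, v2, v3)" by (cases Z rule: prod_cases4)
  have "qproportional x Z" unfolding Z_def using ws(1,3) by (rule qproportional_word_quat)
  have "ws \<noteq> []"
  proof
    assume "ws = []"
    with ws(3) have "G_eq gone (\<psi> x)" by simp
    with x(2) show False by (blast dest: G_eq_sym)
  qed
  have norm_Z: "qnorm Z = int q ^ length ws"
    unfolding Z_def using ws(1) by (rule qnorm_word_quat_generators)
  with \<open>ws \<noteq> []\<close> have "int q dvd qnorm Z" by simp
  have v: "(v1, v2, v3) \<noteq> (0, 0, 0)"
  proof
    assume "(v1, v2, v3) = (0, 0, 0)"
    moreover have "Z \<noteq> 0" unfolding Z_def using ws(1) by (rule word_quat_ne_0)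
    ultimately have "G_eq (\<psi> Z) gone" using Z_eq by (simp add: G_eq_psi_scalar_gone zero_prod_def)
    with G_eq_psi_if_qproportional[OF \<open>qproportional x Z\<close>] x(2) show False
      by (blast dest: G_eq_trans)
  qed
  have "nval x = nval Z" using nval_qproportional[OF \<open>qproportional x Z\<close> Z_eq v] .
  moreover have "int q dvd nval Z \<longleftrightarrow> qdvd (int q) (qmult Z Z)"
    and "Legendre (- nval Z) (int q) = 1 \<longleftrightarrow> \<not> int q dvd nval Z"
    using primitive_quat_square_characterization[OF _ _ Z_eq v \<open>int q dvd qnorm Z\<close>] ws(2)
      prime_q odd_q by (simp_all add: Z_def)
  ultimately show ?thesis using word_length_square_iff[OF ws] by (simp add: Z_def)
qed

end

theorem lemma3p3:
  fixes p l :: nat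
    and cp dp :: "'a::field_char_0"
    and cl dl :: "'b::field_char_0"
  assumes "prime p" and "prime l" and "odd p" and "odd l" and "p \<noteq> l"
    and "cp^2 + dp^2 + 1 = 0" and "cl^2 + dl^2 + 1 = 0"
  defines "wl \<equiv> word_length cp dp cl dl (A_tilde p l \<union> B_tilde p l)"
  shows
    "(\<forall>x. in_Gamma_tilde p l x
         \<and> in_generated cp dp cl dl (A_tilde p l) (psi cp dp cl dl x)
         \<and> \<not> G_eq (psi cp dp cl dl x) gone \<longrightarrow>
        ((\<not> int p dvd nval x) \<longleftrightarrow>
           wl (gmul (psi cp dp cl dl x) (psi cp dp cl dl x)) = 2 * wl (psi cp dp cl dl x))
      \<and> (wl (gmul (psi cp dp cl dl x) (psi cp dp cl dl x)) = 2 * wl (psi cp dp cl dl x) \<longleftrightarrow>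
           Legendre (- nval x) (int p) = 1))
   \<and> (\<forall>y. in_Gamma_tilde p l y
         \<and> in_generated cp dp cl dl (B_tilde p l) (psi cp dp cl dl y)
         \<and> \<not> G_eq (psi cp dp cl dl y) gone \<longrightarrow>
        ((\<not> int l dvd nval y) \<longleftrightarrow>
           wl (gmul (psi cp dp cl dl y) (psi cp dp cl dl y)) = 2 * wl (psi cp dp cl dl y))
      \<and> (wl (gmul (psi cp dp cl dl y) (psi cp dp cl dl y)) = 2 * wl (psi cp dp cl dl y) \<longleftrightarrow>
           Legendre (- nval y) (int l) = 1))"
proof -
  have A: "A_tilde p l = generators p l p" and B: "B_tilde p l = generators p l l"
    by (simp_all add: A_tilde_def B_tilde_def generators_def)
  let ?S = "generators p l p \<union> generators p l l"
  have norms: "\<forall>y\<in>?S. qnorm y = int p \<or> qnorm y = int l"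
    using qnorm_generator by blast
  interpret p_side: word_length_setting cp dp cl dl p l p l ?S
    using assms norms by unfold_locales auto
  interpret l_side: word_length_setting cp dp cl dl p l l p ?S
    using assms norms by unfold_locales auto
  show ?thesis unfolding wl_def A B
    using p_side.word_length_square_characterization l_side.word_length_square_characterization
    by blast
qed

end
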